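(* Let $X$ be a finite set with $|X|=n$, $0\notin X$, $W=X\cup\{0\}$. Let $\mathfrak{V}$ be a $\big(\binom{n}{2}_{\,n-2}\ \binom{n}{3}_{\,3}\big)$-configuration whose point set is $\mathcal{P}_2(X)$, and let $\mathfrak{M}$ be the structure with point set $\mathcal{P}_2(W)$ whose lines are the lines of $\mathfrak{V}$ together with all sets $\{\{0,x\},\{0,y\},\{x,y\}\}$ for distinct $x,y\in X$. Let $H$ be a hyperplane of $\mathfrak{M}$. On $X$ define $x\sim y$ iff $x=y$, or $x\neq y$ and $\{x,y\}\in H$. Then $\sim$ is an equivalence relation on $X$.
   Context: $\mathcal{P}_2(Y)$ denotes the set of $2$-element subsets of $Y$. A $(v_r\ b_k)$-configuration is a partial linear space with $v$ points and $b$ lines, each point on exactly $r$ lines and each line containing exactly $k$ points. A subspace is a set of points containing every line that meets it in at least two points; a hyperplane is a proper subspace meeting every line. *)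

theory Defs
  imports Main
begin

definition P2 :: "'a set \<Rightarrow> 'a set set" where
  "P2 Y = {e. e \<subseteq> Y \<and> card e = 2}"

definition partial_linear_space :: "'p set \<Rightarrow> 'p set set \<Rightarrow> bool" where
  "partial_linear_space P L \<longleftrightarrow>
     (\<forall>l\<in>L. l \<subseteq> P \<and> 2 \<le> card l) \<and>
     (\<forall>p\<in>P. \<forall>q\<in>P. p \<noteq> q \<longrightarrow>
        (\<forall>l\<in>L. \<forall>m\<in>L. p \<in> l \<and> q \<in> l \<and> p \<in> m \<and> q \<in> m \<longrightarrow> l = m))"

definition configuration ::
  "'p set \<Rightarrow> 'p set set \<Rightarrow> nat \<Rightarrow> nat \<Rightarrow> nat \<Rightarrow> nat \<Rightarrow> bool" where
  "configuration P L v r b k \<longleftrightarrow>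
     partial_linear_space P L \<and> finite P \<and> finite L \<and>
     card P = v \<and> card L = b \<and>
     (\<forall>p\<in>P. card {l\<in>L. p \<in> l} = r) \<and>
     (\<forall>l\<in>L. card l = k)"

definition subspace :: "'p set \<Rightarrow> 'p set set \<Rightarrow> 'p set \<Rightarrow> bool" where
  "subspace P L S \<longleftrightarrow> S \<subseteq> P \<and>
     (\<forall>l\<in>L. 2 \<le> card (l \<inter> S) \<longrightarrow> l \<subseteq> S)"

definition hyperplane :: "'p set \<Rightarrow> 'p set set \<Rightarrow> 'p set \<Rightarrow> bool" where
  "hyperplane P L H \<longleftrightarrow> subspace P L H \<and> H \<noteq> P \<and>
     (\<forall>l\<in>L. l \<inter> H \<noteq> {})"

end

theory Submission
  imports Defs
begin

text \<open>A hyperplane meets each three-point line in one point or contains it, so the number of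
  points of such a line lying in the hyperplane is odd. Applied to the line
  \<open>{{0,x}, {0,y}, {x,y}}\<close> this says that \<open>{x,y} \<in> H\<close> exactly when \<open>{0,x}\<close> and \<open>{0,y}\<close> are
  either both in \<open>H\<close> or both outside it; hence \<open>\<sim>\<close> is the kernel of the map
  \<open>x \<mapsto> ({0,x} \<in> H)\<close>.\<close>

lemma subspace_contains_line:
  assumes "subspace P L S" "l \<in> L" "finite l"
    and "p \<in> l" "q \<in> l" "p \<noteq> q" "p \<in> S" "q \<in> S"
  shows "l \<subseteq> S"
proof -
  have "card {p, q} \<le> card (l \<inter> S)"
    using assms(3-) by (intro card_mono) auto
  then show ?thesis
    using assms(1,2,6) unfolding subspace_def by auto
qed

lemma hyperplane_three_point_line:
  assumes "hyperplane P L H" "{p, q, r} \<in> L" "p \<noteq> q" "p \<noteq> r" "q \<noteq> r"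
  shows "r \<in> H \<longleftrightarrow> (p \<in> H \<longleftrightarrow> q \<in> H)"
proof -
  have sub: "subspace P L H" and meets: "{p, q, r} \<inter> H \<noteq> {}"
    using assms(1,2) unfolding hyperplane_def by auto
  have "{p, q, r} \<subseteq> H" if "u \<in> {p, q, r}" "v \<in> {p, q, r}" "u \<noteq> v" "u \<in> H" "v \<in> H" for u v
    using subspace_contains_line[OF sub assms(2) _ that] by simp
  then show ?thesis
    using meets assms(3-5) by blast
qed

theorem lemma3p1:
  fixes X :: "'a set" and z :: 'a and LV :: "'a set set set" and H :: "'a set set"
  assumes "finite X" and "card X = n" and "z \<notin> X"
    and "configuration (P2 X) LV (n choose 2) (n - 2) (n choose 3) 3"
    and "hyperplane (P2 (insert z X))
           (LV \<union> {{{z, x}, {z, y}, {x, y}} | x y. x \<in> X \<and> y \<in> X \<and> x \<noteq> y}) H"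
  shows "equiv X {(x, y). x \<in> X \<and> y \<in> X \<and> (x = y \<or> (x \<noteq> y \<and> {x, y} \<in> H))}"
proof -
  have edge_iff: "{x, y} \<in> H \<longleftrightarrow> ({z, x} \<in> H \<longleftrightarrow> {z, y} \<in> H)"
    if "x \<in> X" "y \<in> X" "x \<noteq> y" for x y
  proof (rule hyperplane_three_point_line[OF assms(5)])
    show "{{z, x}, {z, y}, {x, y}} \<in>
        LV \<union> {{{z, x}, {z, y}, {x, y}} | x y. x \<in> X \<and> y \<in> X \<and> x \<noteq> y}"
      using that by blast
  qed (use that assms(3) in \<open>auto simp: doubleton_eq_iff\<close>)
  have "{(x, y). x \<in> X \<and> y \<in> X \<and> (x = y \<or> (x \<noteq> y \<and> {x, y} \<in> H))}
      = {(x, y). x \<in> X \<and> y \<in> X \<and> ({z, x} \<in> H \<longleftrightarrow> {z, y} \<in> H)}"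
    using edge_iff by auto
  also have "equiv X \<dots>"
    by (rule equivI) (auto simp: refl_on_def sym_def intro: transI)
  finally show ?thesis .
qed

end
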